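(* Let $G$ be a finite group, let $g\in G$, and let $\phi=\sum_{\chi\in\mathrm{Irr}(G)}a_\chi\chi$ be a non-negative virtual character of $G$. Then $$c(g)\;\le\;\mathrm{Prob}\big([a,b]^{-1}g\in\ker(\phi)\big)\;=\;\mathrm{Prob}\big(\xi_{g,\phi}=\phi(1)\big),$$ and if moreover $\phi$ is exact, then $c(g)=\mathrm{Prob}\big(\xi_{g,\phi}=\phi(1)\big)$.
   Context: $G$ is a finite group of order $m$; $\mathrm{Irr}(G)$ is the set of irreducible complex characters of $G$. $G\times G$ is a probability space with the uniform measure (mass $1/m^2$ at each point), and $\mathrm{Prob}$ refers to this measure, with $(a,b)$ the random pair. For $g\in G$, $c(g)=|\{(x,y)\in G\times G:[x,y]=g\}|/|G\times G|$. A virtual character $\phi=\sum_{\chi\in\mathrm{Irr}(G)}a_\chi\chi$ with $a_\chi\in\mathbb{C}$ is called non-negative if (a) $\mathrm{Re}(\phi(h))\ge 0$ for all $h\in G$, and (b) all coefficients $a_\chi$ are non-negative real numbers and at least one is non-zero. Its kernel is $\ker(\phi)=\{h\in G:\phi(h)=\phi(1)\}$, and a non-negative virtual character is called exact if $\ker(\phi)=\{1\}$. For $g\in G$, the real random variable $\xi_{g,\phi}$ on $G\times G$ is $\xi_{g,\phi}(a,b)=\mathrm{Re}\big(\phi([a,b]^{-1}g)\big)$. *)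

theory Defs
  imports "HOL-Algebra.Group" "Jordan_Normal_Form.Matrix"
begin

definition commutator :: "('a, 'b) monoid_scheme \<Rightarrow> 'a \<Rightarrow> 'a \<Rightarrow> 'a" where
  "commutator G x y = inv\<^bsub>G\<^esub> x \<otimes>\<^bsub>G\<^esub> inv\<^bsub>G\<^esub> y \<otimes>\<^bsub>G\<^esub> x \<otimes>\<^bsub>G\<^esub> y"

definition prob_GG :: "('a, 'b) monoid_scheme \<Rightarrow> ('a \<Rightarrow> 'a \<Rightarrow> bool) \<Rightarrow> real" where
  "prob_GG G P = real (card {(x, y). x \<in> carrier G \<and> y \<in> carrier G \<and> P x y})
                 / (real (card (carrier G)))^2"

definition comm_prob :: "('a, 'b) monoid_scheme \<Rightarrow> 'a \<Rightarrow> real" where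
  "comm_prob G g = prob_GG G (\<lambda>x y. commutator G x y = g)"

definition is_rep :: "('a, 'b) monoid_scheme \<Rightarrow> nat \<Rightarrow> ('a \<Rightarrow> complex mat) \<Rightarrow> bool" where
  "is_rep G n \<rho> \<longleftrightarrow>
     (\<forall>x \<in> carrier G. \<rho> x \<in> carrier_mat n n) \<and>
     \<rho> \<one>\<^bsub>G\<^esub> = 1\<^sub>m n \<and>
     (\<forall>x \<in> carrier G. \<forall>y \<in> carrier G. \<rho> (x \<otimes>\<^bsub>G\<^esub> y) = \<rho> x * \<rho> y)"

definition is_subspace :: "nat \<Rightarrow> complex vec set \<Rightarrow> bool" where
  "is_subspace n W \<longleftrightarrow> W \<subseteq> carrier_vec n \<and> 0\<^sub>v n \<in> W \<and>
     (\<forall>v \<in> W. \<forall>w \<in> W. v + w \<in> W) \<and> (\<forall>c. \<forall>v \<in> W. c \<cdot>\<^sub>v v \<in> W)"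

definition is_irr_rep :: "('a, 'b) monoid_scheme \<Rightarrow> nat \<Rightarrow> ('a \<Rightarrow> complex mat) \<Rightarrow> bool" where
  "is_irr_rep G n \<rho> \<longleftrightarrow> is_rep G n \<rho> \<and> n > 0 \<and>
     (\<forall>W. is_subspace n W \<and> (\<forall>x \<in> carrier G. \<forall>w \<in> W. \<rho> x *\<^sub>v w \<in> W)
          \<longrightarrow> W = {0\<^sub>v n} \<or> W = carrier_vec n)"

definition mat_trace :: "complex mat \<Rightarrow> complex" where
  "mat_trace A = (\<Sum>i < dim_row A. A $$ (i, i))"

definition character_of :: "('a, 'b) monoid_scheme \<Rightarrow> ('a \<Rightarrow> complex mat) \<Rightarrow> 'a \<Rightarrow> complex" where
  "character_of G \<rho> = (\<lambda>x. if x \<in> carrier G then mat_trace (\<rho> x) else 0)"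

definition Irr :: "('a, 'b) monoid_scheme \<Rightarrow> ('a \<Rightarrow> complex) set" where
  "Irr G = {character_of G \<rho> | n \<rho>. is_irr_rep G n \<rho>}"

definition virtual_char :: "('a, 'b) monoid_scheme \<Rightarrow> (('a \<Rightarrow> complex) \<Rightarrow> complex) \<Rightarrow> 'a \<Rightarrow> complex" where
  "virtual_char G a = (\<lambda>h. \<Sum>\<chi> \<in> Irr G. a \<chi> * \<chi> h)"

definition nonneg_virtual_char :: "('a, 'b) monoid_scheme \<Rightarrow> (('a \<Rightarrow> complex) \<Rightarrow> complex) \<Rightarrow> bool" where
  "nonneg_virtual_char G a \<longleftrightarrow>
     (\<forall>h \<in> carrier G. Re (virtual_char G a h) \<ge> 0) \<and>
     (\<forall>\<chi> \<in> Irr G. a \<chi> \<in> \<real> \<and> Re (a \<chi>) \<ge> 0) \<and>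
     (\<exists>\<chi> \<in> Irr G. a \<chi> \<noteq> 0)"

definition vchar_ker :: "('a, 'b) monoid_scheme \<Rightarrow> ('a \<Rightarrow> complex) \<Rightarrow> 'a set" where
  "vchar_ker G \<phi> = {h \<in> carrier G. \<phi> h = \<phi> \<one>\<^bsub>G\<^esub>}"

definition exact_vchar :: "('a, 'b) monoid_scheme \<Rightarrow> (('a \<Rightarrow> complex) \<Rightarrow> complex) \<Rightarrow> bool" where
  "exact_vchar G a \<longleftrightarrow> nonneg_virtual_char G a \<and> vchar_ker G (virtual_char G a) = {\<one>\<^bsub>G\<^esub>}"

definition xi :: "('a, 'b) monoid_scheme \<Rightarrow> 'a \<Rightarrow> ('a \<Rightarrow> complex) \<Rightarrow> 'a \<Rightarrow> 'a \<Rightarrow> real" where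
  "xi G g \<phi> x y = Re (\<phi> (inv\<^bsub>G\<^esub> (commutator G x y) \<otimes>\<^bsub>G\<^esub> g))"

end

theory Submission
  imports Defs "HOL-Algebra.Multiplicative_Group" "Jordan_Normal_Form.Schur_Decomposition"
begin

(* Every value of a character is the trace of a matrix of finite order, i.e. a sum of chi(1)
   roots of unity, so |chi(h)| <= chi(1).  With non-negative real coefficients this gives
   |phi(h)| <= phi(1), hence Re phi(h) = phi(1) forces phi(h) = phi(1): the events
   "[a,b]^-1 g in ker phi" and "xi = phi(1)" coincide.  The first contains the event
   "[a,b] = g", and equals it when ker phi is trivial. *)

lemma mat_trace_mult_comm:
  fixes X Y :: "complex mat"
  assumes "X \<in> carrier_mat n k" "Y \<in> carrier_mat k n"
  shows "mat_trace (X * Y) = mat_trace (Y * X)"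
proof -
  have "mat_trace (X * Y) = (\<Sum>i<n. \<Sum>j<k. X $$ (i,j) * Y $$ (j,i))"
    using assms by (simp add: mat_trace_def scalar_prod_def lessThan_atLeast0)
  also have "\<dots> = (\<Sum>j<k. \<Sum>i<n. Y $$ (j,i) * X $$ (i,j))"
    by (subst sum.swap) (simp add: mult.commute)
  also have "\<dots> = mat_trace (Y * X)"
    using assms by (simp add: mat_trace_def scalar_prod_def lessThan_atLeast0)
  finally show ?thesis .
qed

lemma mat_trace_similar:
  assumes "A \<in> carrier_mat n n" "similar_mat A B"
  shows "mat_trace A = mat_trace B"
proof -
  obtain P Q where PQ: "similar_mat_wit A B P Q"
    using assms(2) unfolding similar_mat_def by blast
  have P: "P \<in> carrier_mat n n" and Q: "Q \<in> carrier_mat n n" and B: "B \<in> carrier_mat n n"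
    and QP: "Q * P = 1\<^sub>m n" and A_eq: "A = P * B * Q"
    using PQ assms(1) unfolding similar_mat_wit_def Let_def by auto
  have "mat_trace A = mat_trace (Q * (P * B))"
    using A_eq P Q B by (simp add: mat_trace_mult_comm[of "P * B" n n Q, symmetric])
  also have "Q * (P * B) = B"
    using P Q B QP by (simp add: assoc_mult_mat[symmetric])
  finally show ?thesis .
qed

lemma eigenvalue_norm_eq_1_if_mat_pow_eq_1:
  fixes A :: "complex mat"
  assumes A: "A \<in> carrier_mat n n" and pow: "A ^\<^sub>m m = 1\<^sub>m n" and "m > 0"
    and "eigenvalue A l"
  shows "cmod l = 1"
proof -
  obtain v where v: "eigenvector A v l"
    using assms(4) unfolding eigenvalue_def by blast
  have v_carrier: "v \<in> carrier_vec n" and v_nz: "v \<noteq> 0\<^sub>v n"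
    using v A unfolding eigenvector_def by auto
  have v_eq: "v = l ^ m \<cdot>\<^sub>v v"
    using eigenvector_pow[OF A v, of m] pow v_carrier by simp
  obtain j where j: "j < n" "v $ j \<noteq> 0"
    using v_carrier v_nz by (metis eq_vecI carrier_vecD index_zero_vec)
  have "v $ j = l ^ m * v $ j"
    using v_eq j v_carrier by (metis index_smult_vec(1) carrier_vecD)
  with j have "l ^ m = 1" by simp
  then show ?thesis using power_eq_1_iff[of l m] \<open>m > 0\<close> by simp
qed

lemma mat_trace_norm_le_dim_if_mat_pow_eq_1:
  fixes A :: "complex mat"
  assumes A: "A \<in> carrier_mat n n" and pow: "A ^\<^sub>m m = 1\<^sub>m n" and "m > 0"
  shows "cmod (mat_trace A) \<le> real n"
proof -
  obtain es where es: "char_poly A = (\<Prod>a\<leftarrow>es. [:- a, 1:])"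
    using char_poly_factorized[OF A] by blast
  obtain B where B: "B \<in> carrier_mat n n" "upper_triangular B" "similar_mat A B"
    using schur_decomposition_exists[OF A es] by blast
  have diag_unit: "cmod (B $$ (i,i)) = 1" if "i < n" for i
  proof -
    have "B $$ (i,i) \<in> set (diag_mat B)"
      using that B(1) by (auto simp: diag_mat_def)
    then have "poly (char_poly A) (B $$ (i,i)) = 0"
      using char_poly_similar[OF B(3)] char_poly_upper_triangular[OF B(1,2)]
      by (simp add: linear_poly_root)
    then have "eigenvalue A (B $$ (i,i))"
      using eigenvalue_root_char_poly[OF A] by simp
    then show ?thesis
      using eigenvalue_norm_eq_1_if_mat_pow_eq_1[OF A pow \<open>m > 0\<close>] by blast
  qed
  have "mat_trace A = (\<Sum>i<n. B $$ (i,i))"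
    using mat_trace_similar[OF A B(3)] B(1) by (simp add: mat_trace_def)
  then have "cmod (mat_trace A) \<le> (\<Sum>i<n. cmod (B $$ (i,i)))"
    by (simp add: norm_sum)
  also have "\<dots> = real n"
    using diag_unit by simp
  finally show ?thesis .
qed

lemma is_rep_pow:
  assumes "monoid G" "is_rep G n \<rho>" "h \<in> carrier G"
  shows "\<rho> (h [^]\<^bsub>G\<^esub> (k::nat)) = \<rho> h ^\<^sub>m k"
proof (induction k)
  case 0
  have "dim_row (\<rho> h) = n"
    using assms unfolding is_rep_def by auto
  then show ?case
    using assms unfolding is_rep_def by simp
next
  case (Suc k)
  interpret monoid G by fact
  have "\<rho> (h [^]\<^bsub>G\<^esub> Suc k) = \<rho> (h [^]\<^bsub>G\<^esub> k) * \<rho> h"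
    using assms unfolding is_rep_def by simp
  with Suc show ?case by simp
qed

lemma character_of_one:
  assumes "monoid G" "is_rep G n \<rho>"
  shows "character_of G \<rho> \<one>\<^bsub>G\<^esub> = of_nat n"
  using assms monoid.one_closed unfolding character_of_def is_rep_def by (simp add: mat_trace_def)

lemma character_of_norm_le_degree:
  assumes "group G" "finite (carrier G)" "is_rep G n \<rho>" "h \<in> carrier G"
  shows "cmod (character_of G \<rho> h) \<le> real n"
proof -
  interpret group G by fact
  have "\<rho> h ^\<^sub>m Coset.order G = \<rho> (h [^]\<^bsub>G\<^esub> Coset.order G)"
    using is_rep_pow[OF is_monoid assms(3,4)] by simp
  also have "\<dots> = 1\<^sub>m n"
    using pow_order_eq_1[OF assms(4)] assms(3) unfolding is_rep_def by simp
  finally have "cmod (mat_trace (\<rho> h)) \<le> real n"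
    using assms(2-4) order_gt_0_iff_finite unfolding is_rep_def
    by (intro mat_trace_norm_le_dim_if_mat_pow_eq_1) auto
  then show ?thesis
    using assms(4) unfolding character_of_def by simp
qed

lemma Irr_norm_le_degree:
  assumes "group G" "finite (carrier G)" "\<chi> \<in> Irr G" "h \<in> carrier G"
  obtains n :: nat where "\<chi> \<one>\<^bsub>G\<^esub> = of_nat n" "cmod (\<chi> h) \<le> real n"
proof -
  obtain n \<rho> where "\<chi> = character_of G \<rho>" "is_rep G n \<rho>"
    using assms(3) unfolding Irr_def is_irr_rep_def by blast
  then show ?thesis
    using that character_of_one[OF group.is_monoid[OF assms(1)]]
      character_of_norm_le_degree[OF assms(1,2) _ assms(4)] by blast
qed

lemma virtual_char_norm_le_value_at_one:
  assumes "group G" "finite (carrier G)" "h \<in> carrier G"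
    and coeffs: "\<forall>\<chi> \<in> Irr G. a \<chi> \<in> \<real> \<and> Re (a \<chi>) \<ge> 0"
  shows "virtual_char G a \<one>\<^bsub>G\<^esub> \<in> \<real>"
    and "cmod (virtual_char G a h) \<le> Re (virtual_char G a \<one>\<^bsub>G\<^esub>)"
proof -
  have term_bound: "a \<chi> * \<chi> \<one>\<^bsub>G\<^esub> \<in> \<real> \<and> cmod (a \<chi> * \<chi> h) \<le> Re (a \<chi> * \<chi> \<one>\<^bsub>G\<^esub>)"
    if \<chi>: "\<chi> \<in> Irr G" for \<chi>
  proof -
    obtain n :: nat where n: "\<chi> \<one>\<^bsub>G\<^esub> = of_nat n" "cmod (\<chi> h) \<le> real n"
      using Irr_norm_le_degree[OF assms(1,2) \<chi> assms(3)] by blast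
    define r where "r = Re (a \<chi>)"
    have a_eq: "a \<chi> = of_real r" and "r \<ge> 0"
      using coeffs \<chi> unfolding r_def by (auto simp: complex_is_Real_iff complex_eq_iff)
    have "a \<chi> * \<chi> \<one>\<^bsub>G\<^esub> = of_real (r * real n)"
      using n(1) a_eq by simp
    moreover have "cmod (a \<chi> * \<chi> h) \<le> r * real n"
      using n(2) \<open>r \<ge> 0\<close> a_eq by (simp add: norm_mult mult_left_mono)
    ultimately show ?thesis by simp
  qed
  show "virtual_char G a \<one>\<^bsub>G\<^esub> \<in> \<real>"
    unfolding virtual_char_def using term_bound by (auto intro: sum_in_Reals)
  have "cmod (virtual_char G a h) \<le> (\<Sum>\<chi>\<in>Irr G. cmod (a \<chi> * \<chi> h))"
    unfolding virtual_char_def by (rule norm_sum)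
  also have "\<dots> \<le> (\<Sum>\<chi>\<in>Irr G. Re (a \<chi> * \<chi> \<one>\<^bsub>G\<^esub>))"
    using term_bound by (intro sum_mono) auto
  also have "\<dots> = Re (virtual_char G a \<one>\<^bsub>G\<^esub>)"
    unfolding virtual_char_def by (simp add: Re_sum)
  finally show "cmod (virtual_char G a h) \<le> Re (virtual_char G a \<one>\<^bsub>G\<^esub>)" .
qed

lemma Re_eq_real_iff_eq_if_norm_le:
  fixes z w :: complex
  assumes "w \<in> \<real>" "cmod z \<le> Re w"
  shows "complex_of_real (Re z) = w \<longleftrightarrow> z = w"
proof
  assume Re_z: "complex_of_real (Re z) = w"
  have "Re z ^ 2 + Im z ^ 2 = cmod z ^ 2"
    by (simp add: cmod_power2)
  moreover have "cmod z = Re z"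
    using assms(2) Re_z complex_Re_le_cmod[of z] by (metis Re_complex_of_real antisym)
  ultimately have "Im z = 0" by simp
  with Re_z show "z = w" by (simp add: complex_eq_iff)
next
  assume "z = w"
  with assms(1) show "complex_of_real (Re z) = w"
    by (simp add: complex_is_Real_iff complex_eq_iff)
qed

lemma vchar_ker_iff_Re_eq:
  assumes "group G" "finite (carrier G)" "nonneg_virtual_char G a" "h \<in> carrier G"
  shows "h \<in> vchar_ker G (virtual_char G a)
           \<longleftrightarrow> complex_of_real (Re (virtual_char G a h)) = virtual_char G a \<one>\<^bsub>G\<^esub>"
  using assms Re_eq_real_iff_eq_if_norm_le virtual_char_norm_le_value_at_one[OF assms(1,2,4)]
  unfolding nonneg_virtual_char_def vchar_ker_def by auto

lemma prob_GG_cong: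
  assumes "\<And>x y. x \<in> carrier G \<Longrightarrow> y \<in> carrier G \<Longrightarrow> P x y \<longleftrightarrow> Q x y"
  shows "prob_GG G P = prob_GG G Q"
proof -
  have "{(x, y). x \<in> carrier G \<and> y \<in> carrier G \<and> P x y}
      = {(x, y). x \<in> carrier G \<and> y \<in> carrier G \<and> Q x y}"
    using assms by auto
  then show ?thesis
    unfolding prob_GG_def by simp
qed

lemma prob_GG_mono:
  assumes "finite (carrier G)"
    and "\<And>x y. x \<in> carrier G \<Longrightarrow> y \<in> carrier G \<Longrightarrow> P x y \<Longrightarrow> Q x y"
  shows "prob_GG G P \<le> prob_GG G Q"
proof -
  have "{(x, y). x \<in> carrier G \<and> y \<in> carrier G \<and> Q x y} \<subseteq> carrier G \<times> carrier G"
    by auto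
  then have "finite {(x, y). x \<in> carrier G \<and> y \<in> carrier G \<and> Q x y}"
    using assms(1) finite_subset by blast
  then have "card {(x, y). x \<in> carrier G \<and> y \<in> carrier G \<and> P x y}
      \<le> card {(x, y). x \<in> carrier G \<and> y \<in> carrier G \<and> Q x y}"
    using assms(2) by (intro card_mono) auto
  then show ?thesis
    unfolding prob_GG_def by (intro divide_right_mono) auto
qed

lemma (in group) commutator_closed [intro, simp]:
  "x \<in> carrier G \<Longrightarrow> y \<in> carrier G \<Longrightarrow> commutator G x y \<in> carrier G"
  unfolding commutator_def by simp

theorem lemma1:
  fixes G :: "('a, 'b) monoid_scheme" and g :: 'a
    and a :: "('a \<Rightarrow> complex) \<Rightarrow> complex"
  assumes "group G" and "finite (carrier G)" and "g \<in> carrier G"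
    and "nonneg_virtual_char G a"
  shows "comm_prob G g
           \<le> prob_GG G (\<lambda>x y. inv\<^bsub>G\<^esub> (commutator G x y) \<otimes>\<^bsub>G\<^esub> g
                                  \<in> vchar_ker G (virtual_char G a))
      \<and> prob_GG G (\<lambda>x y. inv\<^bsub>G\<^esub> (commutator G x y) \<otimes>\<^bsub>G\<^esub> g
                                  \<in> vchar_ker G (virtual_char G a))
         = prob_GG G (\<lambda>x y. complex_of_real (xi G g (virtual_char G a) x y)
                                  = virtual_char G a \<one>\<^bsub>G\<^esub>)
      \<and> (exact_vchar G a \<longrightarrow>
         comm_prob G g = prob_GG G (\<lambda>x y. complex_of_real (xi G g (virtual_char G a) x y)
                                  = virtual_char G a \<one>\<^bsub>G\<^esub>))"
proof -
  interpret group G by fact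
  let ?in_ker = "\<lambda>x y. inv\<^bsub>G\<^esub> (commutator G x y) \<otimes>\<^bsub>G\<^esub> g \<in> vchar_ker G (virtual_char G a)"
  have solve: "inv\<^bsub>G\<^esub> (commutator G x y) \<otimes>\<^bsub>G\<^esub> g = \<one>\<^bsub>G\<^esub> \<longleftrightarrow> commutator G x y = g"
    if "x \<in> carrier G" "y \<in> carrier G" for x y
    using that assms(3) inv_solve_left' by auto
  have "comm_prob G g \<le> prob_GG G ?in_ker"
    unfolding comm_prob_def using assms(2,3) solve
    by (intro prob_GG_mono) (auto simp: vchar_ker_def)
  moreover have "prob_GG G ?in_ker
      = prob_GG G (\<lambda>x y. complex_of_real (xi G g (virtual_char G a) x y) = virtual_char G a \<one>\<^bsub>G\<^esub>)"
    unfolding xi_def using vchar_ker_iff_Re_eq[OF assms(1,2,4)] assms(3)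
    by (intro prob_GG_cong) simp
  moreover have "comm_prob G g = prob_GG G ?in_ker" if "exact_vchar G a"
    unfolding comm_prob_def using that solve
    by (intro prob_GG_cong) (simp add: exact_vchar_def)
  ultimately show ?thesis by simp
qed

end
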